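(* Let $\theta>0$ and $\ell\in[m]$. Consider an instance of stochastic $\mathrm{Top}_\ell$-norm load balancing on $m$ identical machines with independent nonnegative job random variables $\{X_j\}_{j\in J}$, where for each job $j$ the distribution of $X_j$ is supported on $\{0\}\cup[\theta,\infty)$, i.e. $\Pr[0<X_j<\theta]=0$. (i) If $\sum_{j\in J}\mathbb{E}[X_j]\le\ell\theta$, then for any assignment $\sigma$, $\mathbb{E}[\mathrm{Top}_\ell(\mathcal{L}^\sigma)]\le2\ell\theta$. (ii) If $\sum_{j\in J}\mathbb{E}[X_j]>\ell\theta$, then for any assignment $\sigma$, $\mathbb{E}[\mathrm{Top}_\ell(\mathcal{L}^\sigma)]>\ell\theta/2$.
   Context: An assignment $\sigma:J\to[m]$ induces the random load vector $\mathcal{L}^\sigma$ with $\mathcal{L}^\sigma_i=\sum_{j:\sigma(j)=i}X_j$. For $x\in\mathbb{R}^m_{\ge0}$, $\mathrm{Top}_\ell(x)$ is the sum of the $\ell$ largest coordinates of $x$. *)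

theory Defs
  imports "HOL-Probability.Probability"
begin

text \<open>Machines are indexed by 0..<m. Load of machine i under assignment sigma at outcome w.\<close>
definition load :: "('j \<Rightarrow> 'w \<Rightarrow> real) \<Rightarrow> 'j set \<Rightarrow> ('j \<Rightarrow> nat) \<Rightarrow> 'w \<Rightarrow> nat \<Rightarrow> real" where
  "load X J \<sigma> w i = (\<Sum>j\<in>{j\<in>J. \<sigma> j = i}. X j w)"

definition top_sum :: "nat \<Rightarrow> nat \<Rightarrow> (nat \<Rightarrow> real) \<Rightarrow> real" where
  "top_sum l m x = sum_list (take l (rev (sort (map x [0..<m]))))"

end

theory Submission
  imports Defs
begin

text \<open>
  Let \<open>p\<close> be the probability that fewer than \<open>l\<close> jobs are nonzero.
  Part (i) holds because \<open>Top\<^sub>l\<close> of the loads never exceeds the total load.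
  For (ii) there are two lower bounds on \<open>E[Top\<^sub>l]\<close>. If at least \<open>l\<close> jobs are
  nonzero, each of size \<open>\<ge> \<theta>\<close>, then either they occupy \<open>l\<close> machines of load
  \<open>\<ge> \<theta>\<close>, or at most \<open>l\<close> machines carry the whole load \<open>\<ge> l\<theta>\<close>; hence
  \<open>E[Top\<^sub>l] \<ge> l\<theta>(1 - p)\<close>. If fewer than \<open>l\<close> jobs other than \<open>j\<close> are nonzero,
  then at most \<open>l\<close> machines are busy and \<open>X\<^sub>j\<close> is counted in full by \<open>Top\<^sub>l\<close>;
  this event contains the event of probability \<open>p\<close> and is independent of \<open>X\<^sub>j\<close>, so
  \<open>E[Top\<^sub>l] \<ge> p \<Sum>\<^sub>j E[X\<^sub>j]\<close>. Depending on whether \<open>p \<ge> 1/2\<close>, one of the two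
  bounds exceeds \<open>l\<theta>/2\<close>.
\<close>

lemma sum_mset_le_sum_list_take:
  fixes ys :: "real list"
  assumes "sorted_wrt (\<ge>) ys" "\<forall>y\<in>set ys. 0 \<le> y" "A \<subseteq># mset ys" "size A \<le> l"
  shows "sum_mset A \<le> sum_list (take l ys)"
  using assms
proof (induction ys arbitrary: A l)
  case Nil
  then show ?case by simp
next
  case (Cons y ys)
  show ?case
  proof (cases "A = {#}")
    case True
    have "0 \<le> sum_list (take l (y # ys))"
      using Cons.prems(2) by (intro sum_list_nonneg) (meson in_mono set_take_subset)
    then show ?thesis using True by simp
  next
    case False
    then obtain l' where l: "l = Suc l'"
      using Cons.prems(4) by (cases l) auto
    obtain a where a: "a \<in># A" "a \<le> y" "A - {#a#} \<subseteq># mset ys"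
    proof (cases "y \<in># A")
      case True
      moreover have "A - {#y#} \<subseteq># mset ys"
        using Cons.prems(3) True subset_eq_diff_conv[of A "{#y#}" "mset ys"] by simp
      ultimately show ?thesis by (intro that) simp_all
    next
      case y: False
      have A: "A \<subseteq># mset ys"
        using Cons.prems(3) y subset_eq_diff_conv[of A "{#y#}" "mset ys"]
          diff_single_trivial[of y A] by simp
      obtain a where "a \<in># A" using False by (meson multiset_nonemptyE)
      moreover have "a \<le> y"
        using A \<open>a \<in># A\<close> Cons.prems(1) by (auto dest: mset_subset_eqD)
      moreover have "A - {#a#} \<subseteq># mset ys"
        using A by (rule subset_mset.order_trans[OF diff_subset_eq_self])
      ultimately show ?thesis by (rule that)
    qed
    have "sum_mset (A - {#a#}) \<le> sum_list (take l' ys)"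
      using Cons.prems a l by (intro Cons.IH) (simp_all add: size_Diff_singleton)
    moreover have "sum_mset A = a + sum_mset (A - {#a#})"
      using a(1) by (rule sum_mset.remove)
    ultimately show ?thesis using l a(2) by simp
  qed
qed

lemma top_sum_ge_sum:
  assumes "\<forall>i<m. 0 \<le> x i" "S \<subseteq> {..<m}" "card S \<le> l"
  shows "sum x S \<le> top_sum l m x"
proof -
  let ?ys = "rev (sort (map x [0..<m]))"
  have "finite S" using assms(2) finite_subset by blast
  have "mset ?ys = image_mset x (mset_set {..<m})"
    by (simp add: mset_set_upto_eq_mset_upto)
  moreover have "mset_set S \<subseteq># mset_set {..<m}"
    using assms(2) by (simp add: subset_imp_msubset_mset_set)
  ultimately have "image_mset x (mset_set S) \<subseteq># mset ?ys"
    by (simp add: image_mset_subseteq_mono)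
  then have "sum_mset (image_mset x (mset_set S)) \<le> sum_list (take l ?ys)"
    using assms(1,3) by (intro sum_mset_le_sum_list_take) (auto simp: sorted_wrt_rev)
  then show ?thesis by (simp add: top_sum_def sum_unfold_sum_mset)
qed

lemma top_sum_nonneg: "\<forall>i<m. 0 \<le> x i \<Longrightarrow> 0 \<le> top_sum l m x"
  using top_sum_ge_sum[of m x "{}"] by simp

lemma top_sum_le_sum:
  assumes "\<forall>i<m. 0 \<le> x i"
  shows "top_sum l m x \<le> sum x {..<m}"
proof -
  let ?ys = "rev (sort (map x [0..<m]))"
  have "0 \<le> sum_list (drop l ?ys)"
    using assms by (intro sum_list_nonneg) (auto dest!: in_set_dropD)
  then have "sum_list (take l ?ys) \<le> sum_list ?ys"
    by (metis append_take_drop_id le_add_same_cancel1 sum_list_append)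
  also have "\<dots> = sum_list (map x [0..<m])"
    by (metis mset_rev mset_sort sum_mset_sum_list)
  also have "\<dots> = sum x {..<m}"
    by (metis atLeast_upt sum_set_upt_conv_sum_list_nat)
  finally show ?thesis by (simp add: top_sum_def)
qed

lemma load_nonneg: "\<forall>j\<in>J. 0 \<le> X j w \<Longrightarrow> 0 \<le> load X J \<sigma> w i"
  unfolding load_def by (intro sum_nonneg) auto

lemma sum_load:
  assumes "finite J" "finite P" "\<forall>j\<in>J. X j w \<noteq> 0 \<longrightarrow> \<sigma> j \<in> P"
  shows "sum (load X J \<sigma> w) P = (\<Sum>j\<in>J. X j w)"
proof -
  let ?J' = "{j\<in>J. \<sigma> j \<in> P}"
  have "sum (load X J \<sigma> w) P = (\<Sum>i\<in>P. \<Sum>j\<in>{j\<in>?J'. \<sigma> j = i}. X j w)"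
    unfolding load_def by (intro sum.cong refl arg_cong2[where f=sum]) auto
  also have "\<dots> = (\<Sum>j\<in>?J'. X j w)"
    using assms by (intro sum.group) auto
  also have "\<dots> = (\<Sum>j\<in>J. X j w)"
    using assms by (intro sum.mono_neutral_left) auto
  finally show ?thesis .
qed

lemma top_sum_load_le_total:
  assumes "finite J" "\<forall>j\<in>J. \<sigma> j < m" "\<forall>j\<in>J. 0 \<le> X j w"
  shows "top_sum l m (load X J \<sigma> w) \<le> (\<Sum>j\<in>J. X j w)"
proof -
  have "top_sum l m (load X J \<sigma> w) \<le> sum (load X J \<sigma> w) {..<m}"
    using assms(3) by (intro top_sum_le_sum) (simp add: load_nonneg)
  also have "\<dots> = (\<Sum>j\<in>J. X j w)"
    using assms(1,2) by (intro sum_load) auto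
  finally show ?thesis .
qed

lemma top_sum_load_eq_total:
  assumes "finite J" "\<forall>j\<in>J. \<sigma> j < m" "\<forall>j\<in>J. 0 \<le> X j w"
    and "card (\<sigma> ` {j\<in>J. X j w \<noteq> 0}) \<le> l"
  shows "top_sum l m (load X J \<sigma> w) = (\<Sum>j\<in>J. X j w)"
proof (rule antisym)
  let ?P = "\<sigma> ` {j\<in>J. X j w \<noteq> 0}"
  have "(\<Sum>j\<in>J. X j w) = sum (load X J \<sigma> w) ?P"
    using assms(1) by (intro sum_load[symmetric]) auto
  also have "\<dots> \<le> top_sum l m (load X J \<sigma> w)"
    using assms by (intro top_sum_ge_sum) (auto simp: load_nonneg)
  finally show "(\<Sum>j\<in>J. X j w) \<le> top_sum l m (load X J \<sigma> w)" .
qed (rule top_sum_load_le_total[of J \<sigma> m X w, OF assms(1-3)])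

lemma top_sum_load_ge_if_many_jobs:
  assumes "finite J" "\<forall>j\<in>J. \<sigma> j < m" "\<forall>j\<in>J. 0 \<le> X j w"
    and gap: "\<forall>j\<in>J. X j w = 0 \<or> \<theta> \<le> X j w" and "0 \<le> \<theta>"
    and many: "l \<le> card {j\<in>J. X j w \<noteq> 0}"
  shows "real l * \<theta> \<le> top_sum l m (load X J \<sigma> w)"
proof (cases "l \<le> card (\<sigma> ` {j\<in>J. X j w \<noteq> 0})")
  case True
  then obtain S where S: "S \<subseteq> \<sigma> ` {j\<in>J. X j w \<noteq> 0}" "card S = l"
    by (meson obtain_subset_with_card_n)
  have "\<theta> \<le> load X J \<sigma> w i" if "i \<in> S" for i
  proof -
    obtain j where j: "j \<in> J" "X j w \<noteq> 0" "\<sigma> j = i" using S(1) \<open>i \<in> S\<close> by auto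
    then have "\<theta> \<le> X j w" using gap by auto
    also have "X j w \<le> load X J \<sigma> w i"
      unfolding load_def using j assms(1,3) by (intro member_le_sum) auto
    finally show ?thesis .
  qed
  then have "real l * \<theta> \<le> sum (load X J \<sigma> w) S"
    using S(2) sum_bounded_below[of S \<theta> "load X J \<sigma> w"] by simp
  also have "\<dots> \<le> top_sum l m (load X J \<sigma> w)"
    using S assms(2,3) by (intro top_sum_ge_sum) (auto simp: load_nonneg)
  finally show ?thesis .
next
  case False
  have "real l * \<theta> \<le> real (card {j\<in>J. X j w \<noteq> 0}) * \<theta>"
    using many \<open>0 \<le> \<theta>\<close> by (simp add: mult_right_mono)
  also have "\<dots> \<le> (\<Sum>j\<in>{j\<in>J. X j w \<noteq> 0}. X j w)"
    using gap sum_bounded_below[of "{j\<in>J. X j w \<noteq> 0}" \<theta> "\<lambda>j. X j w"] by auto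
  also have "\<dots> \<le> (\<Sum>j\<in>J. X j w)"
    using assms(1,3) by (intro sum_mono2) auto
  also have "\<dots> = top_sum l m (load X J \<sigma> w)"
    using False assms(1-3) by (intro top_sum_load_eq_total[symmetric]) auto
  finally show ?thesis .
qed

lemma sum_jobs_with_few_others_le_top_sum_load:
  assumes "finite J" "\<forall>j\<in>J. \<sigma> j < m" "\<forall>j\<in>J. 0 \<le> X j w"
  shows "(\<Sum>j\<in>J. X j w * of_bool (card {k\<in>J - {j}. X k w \<noteq> 0} < l))
           \<le> top_sum l m (load X J \<sigma> w)"
proof (cases "card {j\<in>J. X j w \<noteq> 0} \<le> l")
  case True
  then have "card (\<sigma> ` {j\<in>J. X j w \<noteq> 0}) \<le> l"
    using card_image_le[of "{j\<in>J. X j w \<noteq> 0}" \<sigma>] assms(1) by simp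
  then have "top_sum l m (load X J \<sigma> w) = (\<Sum>j\<in>J. X j w)"
    by (rule top_sum_load_eq_total[of J \<sigma> m X w, OF assms])
  moreover have "(\<Sum>j\<in>J. X j w * of_bool (card {k\<in>J - {j}. X k w \<noteq> 0} < l)) \<le> (\<Sum>j\<in>J. X j w)"
    using assms(3) by (intro sum_mono) auto
  ultimately show ?thesis by simp
next
  case False
  txt \<open>More than \<open>l\<close> jobs are nonzero, so every nonzero job has at least \<open>l\<close> nonzero companions.\<close>
  have "X j w * of_bool (card {k\<in>J - {j}. X k w \<noteq> 0} < l) = 0" if "j \<in> J" for j
  proof (cases "X j w = 0")
    case False
    have "{k\<in>J - {j}. X k w \<noteq> 0} = {k\<in>J. X k w \<noteq> 0} - {j}" by auto
    then have "card {k\<in>J - {j}. X k w \<noteq> 0} = card {k\<in>J. X k w \<noteq> 0} - 1"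
      using that False assms(1) by simp
    then have "\<not> card {k\<in>J - {j}. X k w \<noteq> 0} < l"
      using \<open>\<not> card {j\<in>J. X j w \<noteq> 0} \<le> l\<close> by linarith
    then show ?thesis by simp
  qed simp
  then have "(\<Sum>j\<in>J. X j w * of_bool (card {k\<in>J - {j}. X k w \<noteq> 0} < l)) = 0"
    by (intro sum.neutral) blast
  then show ?thesis
    using assms(3) by (simp add: top_sum_nonneg load_nonneg)
qed

lemma measurable_card_nonzero:
  fixes Y :: "'i \<Rightarrow> 'a \<Rightarrow> real"
  assumes "finite B" "\<And>k. k \<in> B \<Longrightarrow> Y k \<in> borel_measurable N"
  shows "(\<lambda>x. card {k\<in>B. Y k x \<noteq> 0}) \<in> measurable N (count_space UNIV)"
proof -
  have "(\<lambda>x. card {k\<in>B. Y k x \<noteq> 0}) = (\<lambda>x. \<Sum>k\<in>B. of_bool (Y k x \<noteq> 0))"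
    using assms(1) by (simp add: Int_def conj_commute)
  also have "\<dots> \<in> borel_measurable N"
    using assms by (intro borel_measurable_sum) auto
  finally show ?thesis by (simp add: measurable_cong_sets[OF refl sets_borel_eq_count_space])
qed

lemma (in prob_space) indep_var_nn_integral:
  fixes X1 X2 :: "'a \<Rightarrow> ennreal"
  assumes "indep_var borel X1 borel X2"
  shows "(\<integral>\<^sup>+\<omega>. X1 \<omega> * X2 \<omega> \<partial>M) = (\<integral>\<^sup>+\<omega>. X1 \<omega> \<partial>M) * (\<integral>\<^sup>+\<omega>. X2 \<omega> \<partial>M)"
proof -
  have "case_bool borel borel = (\<lambda>_::bool. borel :: ennreal measure)"
    by (simp add: fun_eq_iff split: bool.split)
  then have "indep_vars (\<lambda>_. borel) (case_bool X1 X2) UNIV"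
    using assms unfolding indep_var_def by simp
  then have "(\<integral>\<^sup>+\<omega>. (\<Prod>b\<in>UNIV. case_bool X1 X2 b \<omega>) \<partial>M) = (\<Prod>b\<in>UNIV. \<integral>\<^sup>+\<omega>. case_bool X1 X2 b \<omega> \<partial>M)"
    by (intro indep_vars_nn_integral) auto
  then show ?thesis by (simp add: UNIV_bool mult.commute)
qed

lemma (in prob_space) indep_vars_nn_integral_split:
  fixes X :: "'j \<Rightarrow> 'a \<Rightarrow> real"
  assumes "indep_vars (\<lambda>_. borel) X J" "j \<in> J"
    and "f \<in> borel_measurable borel" "g \<in> borel_measurable (PiM (J - {j}) (\<lambda>_. borel))"
  shows "(\<integral>\<^sup>+\<omega>. f (X j \<omega>) * g (\<lambda>i\<in>J - {j}. X i \<omega>) \<partial>M)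
    = (\<integral>\<^sup>+\<omega>. f (X j \<omega>) \<partial>M) * (\<integral>\<^sup>+\<omega>. g (\<lambda>i\<in>J - {j}. X i \<omega>) \<partial>M)"
proof -
  have "indep_var (PiM {j} (\<lambda>_. borel)) (\<lambda>\<omega>. \<lambda>i\<in>{j}. X i \<omega>)
                  (PiM (J - {j}) (\<lambda>_. borel)) (\<lambda>\<omega>. \<lambda>i\<in>J - {j}. X i \<omega>)"
    using assms(1,2) by (intro indep_var_restrict) auto
  moreover have "(\<lambda>x. f (x j)) \<in> borel_measurable (PiM {j} (\<lambda>_. borel))"
    using assms(3) by measurable
  ultimately have "indep_var borel ((\<lambda>x. f (x j)) \<circ> (\<lambda>\<omega>. \<lambda>i\<in>{j}. X i \<omega>))
                             borel (g \<circ> (\<lambda>\<omega>. \<lambda>i\<in>J - {j}. X i \<omega>))"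
    using assms(4) by (rule indep_var_compose)
  then show ?thesis by (simp add: comp_def indep_var_nn_integral)
qed

lemma (in prob_space) nn_integral_top_sum_load_le:
  assumes "finite J" "\<forall>j\<in>J. \<sigma> j < m" "\<And>j. j \<in> J \<Longrightarrow> random_variable borel (X j)"
    and "AE \<omega> in M. \<forall>j\<in>J. 0 \<le> X j \<omega>"
  shows "(\<integral>\<^sup>+\<omega>. ennreal (top_sum l m (load X J \<sigma> \<omega>)) \<partial>M) \<le> (\<Sum>j\<in>J. \<integral>\<^sup>+\<omega>. ennreal (X j \<omega>) \<partial>M)"
proof -
  have "(\<integral>\<^sup>+\<omega>. ennreal (top_sum l m (load X J \<sigma> \<omega>)) \<partial>M) \<le> (\<integral>\<^sup>+\<omega>. (\<Sum>j\<in>J. ennreal (X j \<omega>)) \<partial>M)"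
  proof (rule nn_integral_mono_AE)
    show "AE \<omega> in M. ennreal (top_sum l m (load X J \<sigma> \<omega>)) \<le> (\<Sum>j\<in>J. ennreal (X j \<omega>))"
      using assms(4)
    proof eventually_elim
      case (elim \<omega>)
      then have "ennreal (top_sum l m (load X J \<sigma> \<omega>)) \<le> ennreal (\<Sum>j\<in>J. X j \<omega>)"
        using top_sum_load_le_total[of J \<sigma> m X \<omega> l] assms(1,2) by (simp add: ennreal_leI)
      also have "\<dots> = (\<Sum>j\<in>J. ennreal (X j \<omega>))"
        using elim by (simp add: sum_ennreal)
      finally show ?case .
    qed
  qed
  also have "\<dots> = (\<Sum>j\<in>J. \<integral>\<^sup>+\<omega>. ennreal (X j \<omega>) \<partial>M)"
    using assms(3) by (intro nn_integral_sum) auto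
  finally show ?thesis .
qed

lemma (in prob_space) nn_integral_top_sum_load_ge_many_jobs:
  assumes "finite J" "\<forall>j\<in>J. \<sigma> j < m" "\<And>j. j \<in> J \<Longrightarrow> random_variable borel (X j)"
    and "AE \<omega> in M. \<forall>j\<in>J. 0 \<le> X j \<omega>" "AE \<omega> in M. \<forall>j\<in>J. X j \<omega> = 0 \<or> \<theta> \<le> X j \<omega>"
    and "0 \<le> \<theta>"
  shows "ennreal (real l * \<theta> * (1 - prob {\<omega>\<in>space M. card {j\<in>J. X j \<omega> \<noteq> 0} < l}))
           \<le> (\<integral>\<^sup>+\<omega>. ennreal (top_sum l m (load X J \<sigma> \<omega>)) \<partial>M)"
proof -
  let ?many = "{\<omega>\<in>space M. l \<le> card {j\<in>J. X j \<omega> \<noteq> 0}}"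
  have [measurable]: "(\<lambda>\<omega>. card {j\<in>J. X j \<omega> \<noteq> 0}) \<in> measurable M (count_space UNIV)"
    using assms(1,3) by (rule measurable_card_nonzero)
  have "?many \<in> events" by measurable
  have "1 - prob {\<omega>\<in>space M. card {j\<in>J. X j \<omega> \<noteq> 0} < l} = prob ?many"
    by (subst prob_compl[symmetric]) (auto intro!: arg_cong[where f=prob])
  then have "ennreal (real l * \<theta> * (1 - prob {\<omega>\<in>space M. card {j\<in>J. X j \<omega> \<noteq> 0} < l}))
      = ennreal (real l * \<theta>) * emeasure M ?many"
    using \<open>0 \<le> \<theta>\<close> by (simp add: emeasure_eq_measure ennreal_mult)
  also have "\<dots> = (\<integral>\<^sup>+\<omega>. ennreal (real l * \<theta>) * indicator ?many \<omega> \<partial>M)"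
    using \<open>?many \<in> events\<close> by (rule nn_integral_cmult_indicator[symmetric])
  also have "\<dots> \<le> (\<integral>\<^sup>+\<omega>. ennreal (top_sum l m (load X J \<sigma> \<omega>)) \<partial>M)"
  proof (rule nn_integral_mono_AE)
    show "AE \<omega> in M. ennreal (real l * \<theta>) * indicator ?many \<omega> \<le> ennreal (top_sum l m (load X J \<sigma> \<omega>))"
      using assms(4,5)
    proof eventually_elim
      case (elim \<omega>)
      then show ?case
        using top_sum_load_ge_if_many_jobs[of J \<sigma> m X \<omega> \<theta> l] assms(1,2,6)
        by (auto simp: indicator_def ennreal_leI)
    qed
  qed
  finally show ?thesis .
qed

lemma (in prob_space) events_card_nonzero_less:
  fixes X :: "'i \<Rightarrow> 'a \<Rightarrow> real"
  assumes "finite B" "\<And>k. k \<in> B \<Longrightarrow> random_variable borel (X k)"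
  shows "{\<omega>\<in>space M. card {k\<in>B. X k \<omega> \<noteq> 0} < l} \<in> events"
proof -
  have [measurable]: "(\<lambda>\<omega>. card {k\<in>B. X k \<omega> \<noteq> 0}) \<in> measurable M (count_space UNIV)"
    using assms by (rule measurable_card_nonzero)
  show ?thesis by measurable
qed

lemma (in prob_space) nn_integral_mult_indicator_few_others:
  fixes l :: nat
  assumes indep: "indep_vars (\<lambda>_. borel) X J" and "finite J" "j \<in> J"
  defines "few \<equiv> {\<omega>\<in>space M. card {k\<in>J - {j}. X k \<omega> \<noteq> 0} < l}"
  shows "(\<integral>\<^sup>+\<omega>. ennreal (X j \<omega> * indicator few \<omega>) \<partial>M) = (\<integral>\<^sup>+\<omega>. ennreal (X j \<omega>) \<partial>M) * emeasure M few"
proof -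
  let ?g = "\<lambda>x. ennreal (of_bool (card {k\<in>J - {j}. x k \<noteq> 0} < l))"
  have [measurable]: "(\<lambda>x. card {k\<in>J - {j}. x k \<noteq> (0::real)}) \<in> measurable (PiM (J - {j}) (\<lambda>_. borel)) (count_space UNIV)"
    using \<open>finite J\<close> by (intro measurable_card_nonzero) auto
  have others: "{k\<in>J - {j}. (\<lambda>i\<in>J - {j}. X i \<omega>) k \<noteq> 0} = {k\<in>J - {j}. X k \<omega> \<noteq> 0}" for \<omega>
    by auto
  have "(\<integral>\<^sup>+\<omega>. ennreal (X j \<omega> * indicator few \<omega>) \<partial>M) = (\<integral>\<^sup>+\<omega>. ennreal (X j \<omega>) * ?g (\<lambda>i\<in>J - {j}. X i \<omega>) \<partial>M)"
    unfolding others by (intro nn_integral_cong) (simp add: few_def ennreal_mult'')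
  also have "\<dots> = (\<integral>\<^sup>+\<omega>. ennreal (X j \<omega>) \<partial>M) * (\<integral>\<^sup>+\<omega>. ?g (\<lambda>i\<in>J - {j}. X i \<omega>) \<partial>M)"
    using indep \<open>j \<in> J\<close> by (intro indep_vars_nn_integral_split) measurable
  also have "(\<integral>\<^sup>+\<omega>. ?g (\<lambda>i\<in>J - {j}. X i \<omega>) \<partial>M) = (\<integral>\<^sup>+\<omega>. indicator few \<omega> \<partial>M)"
    unfolding others by (intro nn_integral_cong) (simp add: few_def indicator_def)
  also have "\<dots> = emeasure M few"
    unfolding few_def using indep \<open>finite J\<close>
    by (intro nn_integral_indicator events_card_nonzero_less) (auto simp: indep_vars_def)
  finally show ?thesis .
qed

lemma (in prob_space) nn_integral_top_sum_load_ge_few_jobs: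
  assumes indep: "indep_vars (\<lambda>_. borel) X J"
    and "finite J" "\<forall>j\<in>J. \<sigma> j < m" "AE \<omega> in M. \<forall>j\<in>J. 0 \<le> X j \<omega>"
  shows "(\<Sum>j\<in>J. \<integral>\<^sup>+\<omega>. ennreal (X j \<omega>) \<partial>M) * ennreal (prob {\<omega>\<in>space M. card {j\<in>J. X j \<omega> \<noteq> 0} < l})
           \<le> (\<integral>\<^sup>+\<omega>. ennreal (top_sum l m (load X J \<sigma> \<omega>)) \<partial>M)"
proof -
  define few where "few B = {\<omega>\<in>space M. card {k\<in>B. X k \<omega> \<noteq> 0} < l}" for B
  have few_events: "few B \<in> events" if "B \<subseteq> J" for B
    unfolding few_def using that indep \<open>finite J\<close>
    by (intro events_card_nonzero_less) (auto simp: indep_vars_def intro: finite_subset)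
  have "(\<Sum>j\<in>J. \<integral>\<^sup>+\<omega>. ennreal (X j \<omega>) \<partial>M) * ennreal (prob (few J))
      = (\<Sum>j\<in>J. (\<integral>\<^sup>+\<omega>. ennreal (X j \<omega>) \<partial>M) * emeasure M (few J))"
    by (simp add: sum_distrib_right emeasure_eq_measure)
  also have "\<dots> \<le> (\<Sum>j\<in>J. (\<integral>\<^sup>+\<omega>. ennreal (X j \<omega>) \<partial>M) * emeasure M (few (J - {j})))"
  proof (intro sum_mono mult_left_mono emeasure_mono)
    have "card {k\<in>J - {j}. X k \<omega> \<noteq> 0} \<le> card {k\<in>J. X k \<omega> \<noteq> 0}" for j \<omega>
      using \<open>finite J\<close> by (intro card_mono) auto
    then show "few J \<subseteq> few (J - {j})" for j
      unfolding few_def using le_less_trans by blast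
  qed (auto intro: few_events)
  also have "\<dots> = (\<Sum>j\<in>J. \<integral>\<^sup>+\<omega>. ennreal (X j \<omega> * indicator (few (J - {j})) \<omega>) \<partial>M)"
    unfolding few_def using indep \<open>finite J\<close>
    by (intro sum.cong refl nn_integral_mult_indicator_few_others[symmetric])
  also have "\<dots> = (\<integral>\<^sup>+\<omega>. (\<Sum>j\<in>J. ennreal (X j \<omega> * indicator (few (J - {j})) \<omega>)) \<partial>M)"
    using indep few_events by (intro nn_integral_sum[symmetric]) (auto simp: indep_vars_def)
  also have "\<dots> \<le> (\<integral>\<^sup>+\<omega>. ennreal (top_sum l m (load X J \<sigma> \<omega>)) \<partial>M)"
  proof (rule nn_integral_mono_AE)
    show "AE \<omega> in M. (\<Sum>j\<in>J. ennreal (X j \<omega> * indicator (few (J - {j})) \<omega>))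
                      \<le> ennreal (top_sum l m (load X J \<sigma> \<omega>))"
      using assms(4) AE_space
    proof eventually_elim
      case (elim \<omega>)
      then have "(\<Sum>j\<in>J. ennreal (X j \<omega> * indicator (few (J - {j})) \<omega>))
          = ennreal (\<Sum>j\<in>J. X j \<omega> * of_bool (card {k\<in>J - {j}. X k \<omega> \<noteq> 0} < l))"
        by (simp add: few_def sum_ennreal indicator_def)
      also have "\<dots> \<le> ennreal (top_sum l m (load X J \<sigma> \<omega>))"
        using elim assms(2,3) by (intro ennreal_leI sum_jobs_with_few_others_le_top_sum_load) auto
      finally show ?case .
    qed
  qed
  finally show ?thesis by (simp add: few_def)
qed

lemma ennreal_half_less_of_mixture_bounds:
  fixes S T :: ennreal and a p :: real
  assumes "0 < a" "ennreal a < S" "0 \<le> p" "p \<le> 1"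
    and "S * ennreal p \<le> T" "ennreal (a * (1 - p)) \<le> T"
  shows "ennreal (a / 2) < T"
proof (cases "1 / 2 \<le> p")
  case True
  have "ennreal (a / 2) = ennreal a * ennreal (1 / 2)"
    using ennreal_mult[of a "1 / 2"] assms(1) by simp
  also have "\<dots> < S * ennreal (1 / 2)"
    using assms(2) ennreal_less_top[of "1 / 2"] ennreal_less_zero_iff[of "1 / 2"]
    by (intro ennreal_mult_strict_right_mono) simp_all
  also have "\<dots> \<le> S * ennreal p"
    using True by (intro mult_left_mono ennreal_leI) simp_all
  finally show ?thesis using assms(5) by simp
next
  case False
  then have "a * p < a * (1 / 2)"
    using assms(1) by (intro mult_strict_left_mono) simp_all
  then have "a / 2 < a * (1 - p)"
    unfolding right_diff_distrib by linarith
  then have "ennreal (a / 2) < ennreal (a * (1 - p))"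
    using assms(1) by (intro ennreal_lessI) simp_all
  then show ?thesis using assms(6) by simp
qed

theorem lemma11:
  fixes M :: "'w measure" and X :: "'j \<Rightarrow> 'w \<Rightarrow> real" and J :: "'j set"
    and \<sigma> :: "'j \<Rightarrow> nat" and m l :: nat and \<theta> :: real
  assumes "prob_space M"
    and "\<theta> > 0"
    and "l \<in> {1..m}"
    and "finite J"
    and "prob_space.indep_vars M (\<lambda>_. borel) X J"
    and "\<forall>j\<in>J. AE w in M. X j w \<ge> 0"
    and "\<forall>j\<in>J. AE w in M. \<not> (0 < X j w \<and> X j w < \<theta>)"
    and "\<forall>j\<in>J. \<sigma> j < m"
  shows "((\<Sum>j\<in>J. \<integral>\<^sup>+ w. ennreal (X j w) \<partial>M) \<le> ennreal (real l * \<theta>) \<longrightarrow>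
           (\<integral>\<^sup>+ w. ennreal (top_sum l m (load X J \<sigma> w)) \<partial>M) \<le> ennreal (2 * real l * \<theta>))
       \<and> ((\<Sum>j\<in>J. \<integral>\<^sup>+ w. ennreal (X j w) \<partial>M) > ennreal (real l * \<theta>) \<longrightarrow>
           (\<integral>\<^sup>+ w. ennreal (top_sum l m (load X J \<sigma> w)) \<partial>M) > ennreal (real l * \<theta> / 2))"
proof -
  interpret prob_space M by fact
  note fin = \<open>finite J\<close> and indep = \<open>indep_vars (\<lambda>_. borel) X J\<close> and machines = \<open>\<forall>j\<in>J. \<sigma> j < m\<close>
  have rv: "random_variable borel (X j)" if "j \<in> J" for j
    using indep that unfolding indep_vars_def by auto
  have nonneg: "AE \<omega> in M. \<forall>j\<in>J. 0 \<le> X j \<omega>"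
    using fin assms(6) by (rule eventually_ball_finite)
  have "AE \<omega> in M. \<forall>j\<in>J. \<not> (0 < X j \<omega> \<and> X j \<omega> < \<theta>)"
    using fin assms(7) by (rule eventually_ball_finite)
  with nonneg have gap: "AE \<omega> in M. \<forall>j\<in>J. X j \<omega> = 0 \<or> \<theta> \<le> X j \<omega>"
    by eventually_elim force
  let ?p = "prob {\<omega>\<in>space M. card {j\<in>J. X j \<omega> \<noteq> 0} < l}"
  let ?E = "\<Sum>j\<in>J. \<integral>\<^sup>+ w. ennreal (X j w) \<partial>M"
  let ?T = "\<integral>\<^sup>+ w. ennreal (top_sum l m (load X J \<sigma> w)) \<partial>M"
  have upper: "?T \<le> ?E"
    using fin machines rv nonneg by (rule nn_integral_top_sum_load_le)
  have few: "?E * ennreal ?p \<le> ?T"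
    using indep fin machines nonneg by (rule nn_integral_top_sum_load_ge_few_jobs)
  have many: "ennreal (real l * \<theta> * (1 - ?p)) \<le> ?T"
    using fin machines rv nonneg gap \<open>\<theta> > 0\<close> by (intro nn_integral_top_sum_load_ge_many_jobs) auto
  have "0 < real l * \<theta>" using \<open>l \<in> {1..m}\<close> \<open>\<theta> > 0\<close> by simp
  show ?thesis
  proof (intro conjI impI)
    assume "?E \<le> ennreal (real l * \<theta>)"
    also have "\<dots> \<le> ennreal (2 * real l * \<theta>)"
      using \<open>0 < real l * \<theta>\<close> by (intro ennreal_leI) linarith
    finally show "?T \<le> ennreal (2 * real l * \<theta>)" using upper by simp
  next
    assume "ennreal (real l * \<theta>) < ?E"
    then show "ennreal (real l * \<theta> / 2) < ?T"
      using \<open>0 < real l * \<theta>\<close> few many by (intro ennreal_half_less_of_mixture_bounds) auto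
  qed
qed

end
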